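(* Assume (H1), (H2). Let $L\in\mathbb R$ and $\lambda_\infty>\|f'\circ\varphi\|_{L^\infty}$. Then for every $s\in(-\infty,L]$, $\mathbb E^u_-(s,\lambda_\infty)\cap\ell_*^{sand}=\{0\}$; consequently the Maslov index of $s\mapsto\mathbb E^u_-(s,\lambda_\infty)$, $s\in[-\infty,L]$, with respect to $\ell_*^{sand}$ is zero.
   Context: Fix real $\nu,\mu$ and $f(u)=\nu u^2-u^3-\mu u$. (H1): $\varphi$ is a smooth stationary solution of $u_t=-(1+\partial_x^2)^2u+f(u)$ with $\varphi(x)\to0$ as $x\to\pm\infty$. (H2): $f'(0)<0$. $B(x,\lambda)=\begin{pmatrix}0&0&0&1\\0&0&1&-2\\-\lambda-1+f'(\varphi(x))&0&0&0\\0&1&0&0\end{pmatrix}$ is the coefficient matrix of the first-order form of $(-\partial_x^4-2\partial_x^2-1+f'(\varphi))u=\lambda u$ in the variables $q=(u,u_{xx},u_{xxx}+2u_x,u_x)$. $\mathbb E^u_-(x,\lambda)$ is the set of values $q(x)$ of solutions of $q'=B(y,\lambda)q$ with $q(y)\to0$ as $y\to-\infty$; at $x=-\infty$ it is defined as the unstable spectral subspace of $B_\infty(\lambda)=\lim_{x\to\pm\infty}B(x,\lambda)$. $\ell_*^{sand}=\{q\in\mathbb R^4:q_1=q_4=0\}$. The Maslov index is the signed count of crossings of the path with the reference plane. *)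

theory Defs
  imports "HOL-Analysis.Analysis"
begin

definition SH_f :: "real \<Rightarrow> real \<Rightarrow> real \<Rightarrow> real" where
  "SH_f \<nu> \<mu> u = \<nu> * u^2 - u^3 - \<mu> * u"

text \<open>Coefficient matrix B(x,lambda) of the first-order system in q = (u, u_xx, u_xxx + 2u_x, u_x);
  entry (i,j) is row i, column j.  The potential is f'(phi x).\<close>
definition SH_B :: "real \<Rightarrow> real \<Rightarrow> (real \<Rightarrow> real) \<Rightarrow> real \<Rightarrow> real \<Rightarrow> real^4^4" where
  "SH_B \<nu> \<mu> \<phi> x lam = vector [
     vector [0, 0, 0, 1],
     vector [0, 0, 1, -2],
     vector [- lam - 1 + deriv (SH_f \<nu> \<mu>) (\<phi> x), 0, 0, 0],
     vector [0, 1, 0, 0]]"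

text \<open>Asymptotic matrix B_infinity(lambda) = lim_{x -> +-infinity} B(x,lambda) (phi -> 0).\<close>
definition SH_B_inf :: "real \<Rightarrow> real \<Rightarrow> real \<Rightarrow> real^4^4" where
  "SH_B_inf \<nu> \<mu> lam = vector [
     vector [0, 0, 0, 1],
     vector [0, 0, 1, -2],
     vector [- lam - 1 + deriv (SH_f \<nu> \<mu>) 0, 0, 0, 0],
     vector [0, 1, 0, 0]]"

definition SH_Eu :: "real \<Rightarrow> real \<Rightarrow> (real \<Rightarrow> real) \<Rightarrow> real \<Rightarrow> real \<Rightarrow> (real^4) set" where
  "SH_Eu \<nu> \<mu> \<phi> x lam =
     {q x | q. (\<forall>y. (q has_vector_derivative (SH_B \<nu> \<mu> \<phi> y lam *v q y)) (at y))
               \<and> (q \<longlongrightarrow> 0) at_bot}"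

definition cvec :: "real^'n \<Rightarrow> complex^'n" where
  "cvec v = (\<chi> i. complex_of_real (v $ i))"

definition cmat :: "real^'n^'m \<Rightarrow> complex^'n^'m" where
  "cmat A = (\<chi> i j. complex_of_real (A $ i $ j))"

definition unstable_subspace :: "real^'n^'n \<Rightarrow> (real^'n) set" where
  "unstable_subspace A = {v. \<exists>S w. finite S \<and>
      (\<forall>z\<in>S. Re z > 0 \<and> ((\<lambda>u. cmat A *v u - z *s u) ^^ CARD('n)) (w z) = 0) \<and>
      cvec v = (\<Sum>z\<in>S. w z)}"

definition ell_sand :: "(real^4) set" where
  "ell_sand = {q. q $ 1 = 0 \<and> q $ 4 = 0}"

end

theory Submission
  imports Defs "HOL-Complex_Analysis.Residue_Theorem"
begin

(*
  Write c(x) = f'(phi x) - lambda_inf - 1, so that B(x, lambda_inf) is the matrix of the system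
  with potential c(x); the hypothesis on lambda_inf gives c < -1 everywhere.
  Along solutions the quadratic form Omega(q) = q1 q3 - q2 q4 - 2 q1 q4 (SH_form) satisfies
  Omega(q)' = (c + 1) q1^2 - (q1 + q2)^2 <= 0.  For a solution decaying at -infinity with q(s) in
  the plane q1 = q4 = 0, Omega(q) vanishes at -infinity and at s, hence on all of (-infinity, s];
  so q1 = q2 = 0 there, and the equations then force q = 0.
  At x = -infinity the eigenvalues z of B_inf solve (z^2 + 1)^2 = 1 + c < 0: they are simple, at
  most two of them have positive real part, and the eigenvectors (1, z^2, z^3 + 2z, z) are
  independent already in the coordinates q1, q4 that cut out the plane.
*)

lemma vector_4 [simp]:
  "(vector [x1, x2, x3, x4] :: 'a::zero^4) $ 1 = x1"
  "(vector [x1, x2, x3, x4] :: 'a::zero^4) $ 2 = x2"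
  "(vector [x1, x2, x3, x4] :: 'a::zero^4) $ 3 = x3"
  "(vector [x1, x2, x3, x4] :: 'a::zero^4) $ 4 = x4"
  unfolding vector_def by simp_all

lemma has_real_derivative_vec_nth:
  assumes "(q has_vector_derivative D) (at y)"
  shows "((\<lambda>x. q x $ i) has_real_derivative D $ i) (at y)"
  using bounded_linear.has_vector_derivative[OF bounded_linear_vec_nth assms]
  by (simp add: has_real_derivative_iff_has_vector_derivative)

lemma has_real_derivative_zero_if_vanishing_below:
  fixes g :: "real \<Rightarrow> real"
  assumes "(g has_real_derivative g') (at x)" and "x < s" and "\<And>y. y < s \<Longrightarrow> g y = 0"
  shows "g' = 0"
proof (rule DERIV_local_const[OF assms(1)])
  show "0 < s - x" using \<open>x < s\<close> by simp
  show "\<forall>y. \<bar>x - y\<bar> < s - x \<longrightarrow> g x = g y"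
    using assms(2,3) by (auto simp: abs_if)
qed

lemma antimono_eq_limit_at_bot_below:
  fixes H :: "'a::{linorder, no_bot} \<Rightarrow> 'b::linorder_topology"
  assumes "antimono H" and "(H \<longlongrightarrow> a) at_bot" and "H s = a" and "x \<le> s"
  shows "H x = a"
proof (rule antisym)
  show "H x \<le> a"
  proof (rule tendsto_lowerbound[OF assms(2)])
    show "\<forall>\<^sub>F t in at_bot. H x \<le> H t"
      unfolding eventually_at_bot_linorder using \<open>antimono H\<close> by (auto dest: antimonoD)
  qed simp
  show "a \<le> H x"
    using assms(1,3,4) by (auto dest: antimonoD)
qed

lemma bounded_range_if_tendsto_at_top_at_bot:
  fixes g :: "real \<Rightarrow> 'a::real_normed_field"
  assumes "continuous_on UNIV g" and "(g \<longlongrightarrow> a) at_top" and "(g \<longlongrightarrow> b) at_bot"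
  shows "bounded (range g)"
proof (rule continuous_bounded_at_infinity_imp_bounded[OF _ _ assms(1)])
  show "g \<in> O[at_bot](\<lambda>_. 1)"
    by (rule bigoI_tendsto[where c = b]) (use assms(3) in simp_all)
  show "g \<in> O[at_top](\<lambda>_. 1)"
    by (rule bigoI_tendsto[where c = a]) (use assms(2) in simp_all)
qed

definition SH_matrix :: "real \<Rightarrow> real^4^4" where
  "SH_matrix c = vector [
     vector [0, 0, 0, 1],
     vector [0, 0, 1, -2],
     vector [c, 0, 0, 0],
     vector [0, 1, 0, 0]]"

lemma SH_matrix_mult_vec: "SH_matrix c *v q = vector [q $ 4, q $ 3 - 2 * q $ 4, c * q $ 1, q $ 2]"
  by (simp add: vec_eq_iff forall_4 SH_matrix_def matrix_vector_mult_def sum_4)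

lemma SH_B_eq_SH_matrix: "SH_B \<nu> \<mu> \<phi> x lam = SH_matrix (deriv (SH_f \<nu> \<mu>) (\<phi> x) - lam - 1)"
  unfolding SH_B_def SH_matrix_def by (simp add: algebra_simps)

lemma SH_B_inf_eq_SH_matrix: "SH_B_inf \<nu> \<mu> lam = SH_matrix (deriv (SH_f \<nu> \<mu>) 0 - lam - 1)"
  unfolding SH_B_inf_def SH_matrix_def by (simp add: algebra_simps)

lemma SH_solution_has_real_derivative:
  assumes "(q has_vector_derivative SH_matrix c *v q y) (at y)"
  shows "((\<lambda>x. q x $ 1) has_real_derivative q y $ 4) (at y)"
    and "((\<lambda>x. q x $ 2) has_real_derivative q y $ 3 - 2 * q y $ 4) (at y)"
    and "((\<lambda>x. q x $ 3) has_real_derivative c * q y $ 1) (at y)"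
    and "((\<lambda>x. q x $ 4) has_real_derivative q y $ 2) (at y)"
  using has_real_derivative_vec_nth[OF assms, of 1] has_real_derivative_vec_nth[OF assms, of 2]
    has_real_derivative_vec_nth[OF assms, of 3] has_real_derivative_vec_nth[OF assms, of 4]
  by (simp_all add: SH_matrix_mult_vec)

definition SH_form :: "real^4 \<Rightarrow> real" where
  "SH_form q = q $ 1 * q $ 3 - q $ 2 * q $ 4 - 2 * q $ 1 * q $ 4"

lemma SH_form_has_real_derivative:
  assumes "(q has_vector_derivative SH_matrix c *v q y) (at y)"
  shows "((\<lambda>x. SH_form (q x)) has_real_derivative
           (c + 1) * (q y $ 1)\<^sup>2 - (q y $ 1 + q y $ 2)\<^sup>2) (at y)"
proof -
  note d = SH_solution_has_real_derivative[OF assms]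
  have "((\<lambda>x. SH_form (q x)) has_real_derivative
      (q y $ 4 * q y $ 3 + q y $ 1 * (c * q y $ 1))
      - ((q y $ 3 - 2 * q y $ 4) * q y $ 4 + q y $ 2 * q y $ 2)
      - (2 * q y $ 4 * q y $ 4 + 2 * q y $ 1 * q y $ 2)) (at y)"
    unfolding SH_form_def by (rule derivative_eq_intros d refl)+ (simp add: algebra_simps)
  then show ?thesis
    by (simp add: algebra_simps power2_eq_square)
qed

lemma SH_decaying_solution_in_ell_sand_eq_zero:
  fixes q :: "real \<Rightarrow> real^4" and c :: "real \<Rightarrow> real"
  assumes sol: "\<And>y. (q has_vector_derivative SH_matrix (c y) *v q y) (at y)"
    and c: "\<And>y. c y < -1"
    and decay: "(q \<longlongrightarrow> 0) at_bot"
    and sand: "q s \<in> ell_sand"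
  shows "q s = 0"
proof -
  define H' where "H' y = (c y + 1) * (q y $ 1)\<^sup>2 - (q y $ 1 + q y $ 2)\<^sup>2" for y
  note dq = SH_solution_has_real_derivative[OF sol]
  have dH: "((\<lambda>x. SH_form (q x)) has_real_derivative H' y) (at y)" for y
    unfolding H'_def by (rule SH_form_has_real_derivative[OF sol])
  have potential_term_nonpos: "(c y + 1) * (q y $ 1)\<^sup>2 \<le> 0" for y
    using c[of y] by (simp add: mult_nonpos_nonneg)
  have H'_nonpos: "H' y \<le> 0" for y
    using potential_term_nonpos[of y] zero_le_power2[of "q y $ 1 + q y $ 2"]
    unfolding H'_def by linarith
  have "antimono (\<lambda>x. SH_form (q x))"
    by (rule antimonoI, rule deriv_nonpos_imp_antimono[OF dH H'_nonpos])
  moreover have "((\<lambda>x. SH_form (q x)) \<longlongrightarrow> 0) at_bot"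
  proof -
    have "((\<lambda>x. q x $ i) \<longlongrightarrow> 0) at_bot" for i
      using tendsto_vec_nth[OF decay, of i] by simp
    then have "((\<lambda>x. SH_form (q x)) \<longlongrightarrow> 0 * 0 - 0 * 0 - 2 * 0 * 0) at_bot"
      unfolding SH_form_def by (intro tendsto_intros)
    then show ?thesis by simp
  qed
  moreover have "SH_form (q s) = 0"
    using sand by (simp add: SH_form_def ell_sand_def)
  ultimately have "SH_form (q x) = 0" if "x \<le> s" for x
    using that by (rule antimono_eq_limit_at_bot_below)
  then have H'_zero: "H' x = 0" if "x < s" for x
    using has_real_derivative_zero_if_vanishing_below[OF dH that] by simp
  have q12: "q x $ 1 = 0 \<and> q x $ 2 = 0" if "x < s" for x
  proof -
    have "(c x + 1) * (q x $ 1)\<^sup>2 = 0" and "(q x $ 1 + q x $ 2)\<^sup>2 = 0"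
      using H'_zero[OF that] potential_term_nonpos[of x] zero_le_power2[of "q x $ 1 + q x $ 2"]
      unfolding H'_def by linarith+
    then show ?thesis
      using c[of x] by simp
  qed
  have q4: "q x $ 4 = 0" if "x < s" for x
    using has_real_derivative_zero_if_vanishing_below[OF dq(1) that] q12 by blast
  have q3: "q x $ 3 = 0" if "x < s" for x
    using has_real_derivative_zero_if_vanishing_below[OF dq(2) that] q12 q4[OF that] by simp
  have "continuous_on (closure {..<s}) q"
    using sol by (intro continuous_at_imp_continuous_on) (blast intro: has_vector_derivative_continuous)
  then show "q s = 0"
    by (rule continuous_constant_on_closure)
      (use q12 q3 q4 in \<open>auto simp: vec_eq_iff forall_4\<close>)
qed

definition SH_shifted :: "real \<Rightarrow> complex \<Rightarrow> complex^4 \<Rightarrow> complex^4" where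
  "SH_shifted c z w = cmat (SH_matrix c) *v w - z *s w"

lemma SH_shifted_nth:
  "SH_shifted c z w $ 1 = w $ 4 - z * w $ 1"
  "SH_shifted c z w $ 2 = w $ 3 - 2 * w $ 4 - z * w $ 2"
  "SH_shifted c z w $ 3 = of_real c * w $ 1 - z * w $ 3"
  "SH_shifted c z w $ 4 = w $ 2 - z * w $ 4"
  by (simp_all add: SH_shifted_def cmat_def SH_matrix_def matrix_vector_mult_def sum_4)

text \<open>det (z I - SH_matrix c)\<close>
definition SH_charpoly :: "real \<Rightarrow> complex \<Rightarrow> complex" where
  "SH_charpoly c z = z ^ 4 + 2 * z\<^sup>2 - of_real c"

lemma SH_shifted_eq_zero_imp_eigenvector:
  assumes "SH_shifted c z w = 0"
  shows "w = w $ 1 *s vector [1, z\<^sup>2, z ^ 3 + 2 * z, z]" and "SH_charpoly c z * w $ 1 = 0"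
proof -
  have "w $ 4 - z * w $ 1 = 0" "w $ 3 - 2 * w $ 4 - z * w $ 2 = 0"
    "of_real c * w $ 1 - z * w $ 3 = 0" "w $ 2 - z * w $ 4 = 0"
    using assms by (metis SH_shifted_nth zero_index)+
  then have "w $ 2 = z\<^sup>2 * w $ 1" "w $ 3 = (z ^ 3 + 2 * z) * w $ 1" "w $ 4 = z * w $ 1"
    and "SH_charpoly c z * w $ 1 = 0"
    unfolding SH_charpoly_def by algebra+
  then show "w = w $ 1 *s vector [1, z\<^sup>2, z ^ 3 + 2 * z, z]" and "SH_charpoly c z * w $ 1 = 0"
    by (simp_all add: vec_eq_iff forall_4 mult.commute)
qed

lemma SH_charpoly_root_simple:
  assumes "c < -1" and "SH_charpoly c z = 0"
  shows "z ^ 3 + z \<noteq> 0"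
proof
  assume "z ^ 3 + z = 0"
  then have "z * (z\<^sup>2 + 1) = 0"
    by (simp add: algebra_simps power2_eq_square power3_eq_cube)
  then consider "z = 0" | "z\<^sup>2 = -1"
    by (metis add_eq_0_iff2 add.commute mult_eq_0_iff)
  then show False
  proof cases
    case 1
    with assms show False by (simp add: SH_charpoly_def)
  next
    case 2
    then have "SH_charpoly c z = of_real (-1 - c)"
      by (simp add: SH_charpoly_def power4_eq_xxxx power2_eq_square[symmetric] mult.assoc)
    with assms show False by (simp del: of_real_diff of_real_minus)
  qed
qed

lemma SH_shifted_square_eq_zero:
  assumes c: "c < -1" and "SH_shifted c z (SH_shifted c z w) = 0"
  shows "SH_shifted c z w = 0"
proof -
  define y where "y = SH_shifted c z w"
  have y: "y = y $ 1 *s vector [1, z\<^sup>2, z ^ 3 + 2 * z, z]" "SH_charpoly c z * y $ 1 = 0"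
    using SH_shifted_eq_zero_imp_eigenvector assms(2) unfolding y_def by blast+
  have "y $ 1 = w $ 4 - z * w $ 1" "y $ 2 = w $ 3 - 2 * w $ 4 - z * w $ 2"
    "y $ 3 = of_real c * w $ 1 - z * w $ 3" "y $ 4 = w $ 2 - z * w $ 4"
    unfolding y_def SH_shifted_nth by simp_all
  moreover have "y $ 2 = z\<^sup>2 * y $ 1" "y $ 3 = (z ^ 3 + 2 * z) * y $ 1" "y $ 4 = z * y $ 1"
    by (subst y(1); simp)+
  ultimately have w_y: "SH_charpoly c z * w $ 1 + 4 * (z ^ 3 + z) * y $ 1 = 0"
    unfolding SH_charpoly_def by algebra
  have "y $ 1 = 0"
  proof (rule ccontr)
    assume y1: "y $ 1 \<noteq> 0"
    then have "SH_charpoly c z = 0"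
      using y(2) by simp
    with w_y have "(z ^ 3 + z) * y $ 1 = 0"
      by algebra
    with y1 have "z ^ 3 + z = 0"
      by simp
    with SH_charpoly_root_simple[OF c \<open>SH_charpoly c z = 0\<close>] show False ..
  qed
  then have "y = 0"
    by (subst y(1)) simp
  then show ?thesis
    unfolding y_def .
qed

lemma funpow_Suc_eq_zero_imp_eq_zero:
  assumes "\<And>w. f (f w) = 0 \<Longrightarrow> f w = 0" and "(f ^^ Suc n) w = 0"
  shows "f w = 0"
  using assms(2)
proof (induction n arbitrary: w)
  case (Suc n)
  then have "f (f w) = 0"
    by (simp add: funpow_Suc_right del: funpow.simps)
  then show ?case
    by (rule assms(1))
qed simp

lemma square_inj_right_half_plane:
  fixes z1 z2 :: complex
  assumes "0 < Re z1" and "0 < Re z2" and "z1\<^sup>2 = z2\<^sup>2"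
  shows "z1 = z2"
proof -
  have "(z1 - z2) * (z1 + z2) = 0"
    using assms(3) by (simp add: algebra_simps power2_eq_square)
  moreover have "z1 + z2 \<noteq> 0"
    using assms(1,2) by (metis add_pos_pos less_irrefl plus_complex.sel(1) zero_complex.sel(1))
  ultimately show ?thesis
    by simp
qed

lemma SH_charpoly_unstable_roots:
  "\<exists>a b. {z. SH_charpoly c z = 0 \<and> 0 < Re z} \<subseteq> {a, b}"
proof -
  define R where "R = {z. SH_charpoly c z = 0 \<and> 0 < Re z}"
  have sum_squares: "z1\<^sup>2 + z2\<^sup>2 = -2" if "z1 \<in> R" "z2 \<in> R" "z1 \<noteq> z2" for z1 z2
  proof -
    have "z1\<^sup>2 \<noteq> z2\<^sup>2"
      using square_inj_right_half_plane that by (auto simp: R_def)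
    moreover have "(z1\<^sup>2 - z2\<^sup>2) * (z1\<^sup>2 + z2\<^sup>2 + 2) = 0"
      using that(1,2) unfolding R_def SH_charpoly_def by algebra
    ultimately have "z1\<^sup>2 + z2\<^sup>2 + 2 = 0"
      by simp
    then show ?thesis
      by algebra
  qed
  show ?thesis
  proof (cases "\<exists>a\<in>R. \<exists>b\<in>R. a \<noteq> b")
    case True
    then obtain a b where ab: "a \<in> R" "b \<in> R" "a \<noteq> b"
      by blast
    have "z = b" if "z \<in> R" "z \<noteq> a" for z
    proof (rule square_inj_right_half_plane)
      show "0 < Re z" "0 < Re b"
        using that(1) ab(2) by (simp_all add: R_def)
      show "z\<^sup>2 = b\<^sup>2"
        using sum_squares[OF ab] sum_squares[OF ab(1) that(1)] that(2) by (metis add_left_cancel)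
    qed
    then show ?thesis
      unfolding R_def[symmetric] by blast
  next
    case False
    then show ?thesis
      unfolding R_def[symmetric] by blast
  qed
qed

lemma weights_zero_if_two_point_support:
  fixes a :: "'a::field \<Rightarrow> 'a"
  assumes "finite S" and support: "{z \<in> S. a z \<noteq> 0} \<subseteq> {z1, z2}"
    and "(\<Sum>z\<in>S. a z) = 0" and "(\<Sum>z\<in>S. z * a z) = 0" and "z \<in> S"
  shows "a z = 0"
proof -
  define b where "b x = (if x \<in> S then a x else 0)" for x
  have restrict: "(\<Sum>x\<in>S. g x) = (\<Sum>x\<in>{z1, z2}. if x \<in> S then g x else 0)"
    if "\<And>x. x \<in> S \<Longrightarrow> a x = 0 \<Longrightarrow> g x = 0" for g :: "'a \<Rightarrow> 'a"
  proof -
    have "(\<Sum>x\<in>S. g x) = (\<Sum>x\<in>{z1, z2} \<inter> S. g x)"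
      using \<open>finite S\<close> support that by (intro sum.mono_neutral_right) auto
    also have "\<dots> = (\<Sum>x\<in>{z1, z2}. if x \<in> S then g x else 0)"
      by (rule sum.inter_restrict) simp
    finally show ?thesis .
  qed
  have sum_b: "(\<Sum>x\<in>{z1, z2}. b x) = 0"
    using restrict[of a] assms(3) by (simp add: b_def)
  have "(\<Sum>x\<in>{z1, z2}. x * b x) = (\<Sum>x\<in>{z1, z2}. if x \<in> S then x * a x else 0)"
    by (rule sum.cong) (simp_all add: b_def)
  then have moment_b: "(\<Sum>x\<in>{z1, z2}. x * b x) = 0"
    using restrict[of "\<lambda>x. x * a x"] assms(4) by simp
  have "b z1 = 0 \<and> b z2 = 0"
  proof (cases "z1 = z2")
    case True
    with sum_b show ?thesis
      by simp
  next
    case False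
    with sum_b moment_b have "b z1 + b z2 = 0" "z1 * b z1 + z2 * b z2 = 0"
      by simp_all
    then have "(z2 - z1) * b z2 = 0"
      by algebra
    with False \<open>b z1 + b z2 = 0\<close> show ?thesis
      by simp
  qed
  then show ?thesis
    using support \<open>z \<in> S\<close> by (auto simp: b_def)
qed

lemma unstable_subspace_SH_matrix_inter_ell_sand:
  assumes c: "c < -1"
  shows "unstable_subspace (SH_matrix c) \<inter> ell_sand = {0}"
proof -
  have "v = 0" if v: "v \<in> unstable_subspace (SH_matrix c)" "v \<in> ell_sand" for v
  proof -
    obtain S w where "finite S"
      and gen_eig: "\<And>z. z \<in> S \<Longrightarrow> 0 < Re z \<and> (SH_shifted c z ^^ 4) (w z) = 0"
      and v_sum: "cvec v = (\<Sum>z\<in>S. w z)"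
      using v(1) unfolding unstable_subspace_def SH_shifted_def[abs_def] by auto
    have eig: "w z = w z $ 1 *s vector [1, z\<^sup>2, z ^ 3 + 2 * z, z]"
      and root: "SH_charpoly c z * w z $ 1 = 0" if "z \<in> S" for z
    proof -
      have "(SH_shifted c z ^^ Suc 3) (w z) = 0"
        using gen_eig[OF that] by simp
      then have "SH_shifted c z (w z) = 0"
        using funpow_Suc_eq_zero_imp_eq_zero SH_shifted_square_eq_zero[OF c] by blast
      from SH_shifted_eq_zero_imp_eigenvector[OF this]
      show "w z = w z $ 1 *s vector [1, z\<^sup>2, z ^ 3 + 2 * z, z]" "SH_charpoly c z * w z $ 1 = 0" .
    qed
    obtain z1 z2 where roots: "{z. SH_charpoly c z = 0 \<and> 0 < Re z} \<subseteq> {z1, z2}"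
      using SH_charpoly_unstable_roots by blast
    have "v $ 1 = 0" "v $ 4 = 0"
      using v(2) by (simp_all add: ell_sand_def)
    then have sum1: "(\<Sum>z\<in>S. w z $ 1) = 0" and sum4: "(\<Sum>z\<in>S. w z $ 4) = 0"
      using arg_cong[OF v_sum, of "\<lambda>x. x $ 1"] arg_cong[OF v_sum, of "\<lambda>x. x $ 4"]
      by (simp_all add: cvec_def)
    have "(\<Sum>z\<in>S. w z $ 4) = (\<Sum>z\<in>S. z * w z $ 1)"
    proof (rule sum.cong)
      show "w z $ 4 = z * w z $ 1" if "z \<in> S" for z
        using arg_cong[OF eig[OF that], of "\<lambda>x. x $ 4"] by (simp add: mult.commute)
    qed simp
    with sum4 have sum_moment: "(\<Sum>z\<in>S. z * w z $ 1) = 0"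
      by simp
    have support: "{z \<in> S. w z $ 1 \<noteq> 0} \<subseteq> {z1, z2}"
      using roots root gen_eig by auto
    have "w z = 0" if "z \<in> S" for z
    proof -
      have "w z $ 1 = 0"
        by (rule weights_zero_if_two_point_support[OF \<open>finite S\<close> support sum1 sum_moment that])
      then show ?thesis
        using eig[OF that] by simp
    qed
    then have "cvec v = 0"
      using v_sum by simp
    then show "v = 0"
      by (simp add: cvec_def vec_eq_iff)
  qed
  moreover have "0 \<in> unstable_subspace (SH_matrix c)"
    unfolding unstable_subspace_def by (auto intro!: exI[of _ "{}"] simp: cvec_def vec_eq_iff)
  moreover have "0 \<in> ell_sand"
    by (simp add: ell_sand_def)
  ultimately show ?thesis
    by blast
qed

lemma deriv_SH_f: "deriv (SH_f \<nu> \<mu>) = (\<lambda>u. 2 * \<nu> * u - 3 * u\<^sup>2 - \<mu>)"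
proof
  fix u
  show "deriv (SH_f \<nu> \<mu>) u = 2 * \<nu> * u - 3 * u\<^sup>2 - \<mu>"
    unfolding SH_f_def[abs_def]
    by (rule DERIV_imp_deriv, (rule derivative_eq_intros refl)+) (simp add: algebra_simps power2_eq_square)
qed

lemma bounded_range_deriv_SH_f_comp:
  fixes \<phi> :: "real \<Rightarrow> real"
  assumes "continuous_on UNIV \<phi>" and "(\<phi> \<longlongrightarrow> a) at_top" and "(\<phi> \<longlongrightarrow> b) at_bot"
  shows "bounded (range (\<lambda>x. deriv (SH_f \<nu> \<mu>) (\<phi> x)))"
proof (rule bounded_range_if_tendsto_at_top_at_bot)
  have cont: "continuous_on UNIV (deriv (SH_f \<nu> \<mu>))"
    unfolding deriv_SH_f by (intro continuous_intros)
  from cont assms(1) show "continuous_on UNIV (\<lambda>x. deriv (SH_f \<nu> \<mu>) (\<phi> x))"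
    by (rule continuous_on_compose2) simp
  from cont have "isCont (deriv (SH_f \<nu> \<mu>)) u" for u
    by (simp add: continuous_on_eq_continuous_at)
  then show "((\<lambda>x. deriv (SH_f \<nu> \<mu>) (\<phi> x)) \<longlongrightarrow> deriv (SH_f \<nu> \<mu>) a) at_top"
    and "((\<lambda>x. deriv (SH_f \<nu> \<mu>) (\<phi> x)) \<longlongrightarrow> deriv (SH_f \<nu> \<mu>) b) at_bot"
    using assms(2,3) by (simp_all add: isCont_tendsto_compose)
qed

lemma abs_less_if_SUP_abs_less:
  fixes g :: "'a \<Rightarrow> real"
  assumes "bounded (range g)" and "(SUP x. \<bar>g x\<bar>) < l"
  shows "\<bar>g x\<bar> < l"
proof -
  have "bdd_above (range (\<lambda>x. \<bar>g x\<bar>))"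
    using assms(1) by (auto simp: bounded_iff intro: bdd_aboveI2)
  then have "\<bar>g x\<bar> \<le> (SUP x. \<bar>g x\<bar>)"
    by (rule cSUP_upper[OF UNIV_I])
  with assms(2) show ?thesis
    by simp
qed

lemma SH_Eu_inter_ell_sand:
  assumes "\<And>x. deriv (SH_f \<nu> \<mu>) (\<phi> x) < lam"
  shows "SH_Eu \<nu> \<mu> \<phi> s lam \<inter> ell_sand = {0}"
proof -
  have "q s = 0" if "\<And>y. (q has_vector_derivative SH_B \<nu> \<mu> \<phi> y lam *v q y) (at y)"
    and "(q \<longlongrightarrow> 0) at_bot" and "q s \<in> ell_sand" for q
    using that assms unfolding SH_B_eq_SH_matrix
    by (intro SH_decaying_solution_in_ell_sand_eq_zero[where c = "\<lambda>y. deriv (SH_f \<nu> \<mu>) (\<phi> y) - lam - 1"])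
      (auto simp: algebra_simps)
  moreover have "0 \<in> SH_Eu \<nu> \<mu> \<phi> s lam"
    unfolding SH_Eu_def by (auto intro!: exI[of _ "\<lambda>_. 0"])
  moreover have "0 \<in> ell_sand"
    by (simp add: ell_sand_def)
  ultimately show ?thesis
    unfolding SH_Eu_def by blast
qed

theorem proposition3:
  fixes \<nu> \<mu> L lam_inf :: real and \<phi> :: "real \<Rightarrow> real"
  assumes H1_smooth: "\<forall>k x. ((deriv ^^ k) \<phi>) differentiable (at x)"
    and H1_stationary: "\<forall>x. - ((deriv ^^ 4) \<phi> x + 2 * (deriv ^^ 2) \<phi> x + \<phi> x)
                               + SH_f \<nu> \<mu> (\<phi> x) = 0"
    and H1_top: "(\<phi> \<longlongrightarrow> 0) at_top"
    and H1_bot: "(\<phi> \<longlongrightarrow> 0) at_bot"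
    and H2: "deriv (SH_f \<nu> \<mu>) 0 < 0"
    and lam: "lam_inf > (SUP x. \<bar>deriv (SH_f \<nu> \<mu>) (\<phi> x)\<bar>)"
  shows "(\<forall>s\<le>L. SH_Eu \<nu> \<mu> \<phi> s lam_inf \<inter> ell_sand = {0})
       \<and> unstable_subspace (SH_B_inf \<nu> \<mu> lam_inf) \<inter> ell_sand = {0}"
proof -
  have "\<phi> differentiable (at x)" for x
    using H1_smooth[rule_format, of 0 x] by simp
  then have "continuous_on UNIV \<phi>"
    by (simp add: continuous_at_imp_continuous_on differentiable_imp_continuous_within)
  then have "bounded (range (\<lambda>x. deriv (SH_f \<nu> \<mu>) (\<phi> x)))"
    using H1_top H1_bot by (rule bounded_range_deriv_SH_f_comp)
  then have potential: "\<bar>deriv (SH_f \<nu> \<mu>) (\<phi> x)\<bar> < lam_inf" for x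
    using lam by (rule abs_less_if_SUP_abs_less)
  have "SH_Eu \<nu> \<mu> \<phi> s lam_inf \<inter> ell_sand = {0}" for s
    using potential by (intro SH_Eu_inter_ell_sand) (simp add: abs_less_iff)
  moreover have "deriv (SH_f \<nu> \<mu>) 0 - lam_inf - 1 < -1"
    using H2 potential[of 0] by simp
  then have "unstable_subspace (SH_B_inf \<nu> \<mu> lam_inf) \<inter> ell_sand = {0}"
    unfolding SH_B_inf_eq_SH_matrix by (rule unstable_subspace_SH_matrix_inter_ell_sand)
  ultimately show ?thesis
    by blast
qed

end
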